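(* With $N_U(B)$ as defined below, let $\mathcal{N}(B)$ be the number of $(\eta_1,\dots,\eta_8,\alpha_1,\alpha_2,\alpha_3)\in\mathbb{Z}^{11}$ satisfying $$\eta_1^2\eta_2\alpha_1^3+\eta_7\alpha_2^2+\eta_4\eta_5^2\eta_6^3\eta_8^4\alpha_3=0,$$ $\eta_1,\dots,\eta_8,\alpha_2\ge1$, the height conditions $$\eta_1^2\eta_2^4\eta_3^6\eta_4^5\eta_5^4\eta_6^3\eta_7^3\eta_8^2\le B,\quad |\eta_1^2\eta_2^3\eta_3^4\eta_4^3\eta_5^2\eta_6\eta_7^2\alpha_1|\le B,\quad |\alpha_3|\le B,\quad \eta_1^3\eta_2^6\eta_3^9\eta_4^7\eta_5^5\eta_6^3\eta_7^5\eta_8\alpha_2\le B^2,$$ and the coprimality conditions $\gcd(\alpha_1,\eta_2\cdots\eta_8)=\gcd(\alpha_2,\eta_1\cdots\eta_6\eta_8)=\gcd(\alpha_3,\eta_1\cdots\eta_7)=1$, $\gcd(\eta_8,\eta_1\cdots\eta_5\eta_7)=\gcd(\eta_7,\eta_1\eta_2\eta_4\eta_5\eta_6)=\gcd(\eta_6,\eta_1\cdots\eta_4)=1$, $\gcd(\eta_5,\eta_1\eta_2\eta_3)=\gcd(\eta_4,\eta_1\eta_2)=\gcd(\eta_3,\eta_1)=1$. Then $N_U(B)=2\mathcal{N}(B)+O(B^{2/3})$.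
   Context: $N_U(B)=\frac12\#\{\mathbf{x}=(x_0,x_1,x_2,x_3)\in\mathbb{Z}^4:\ x_0^2=x_1x_2^3+x_1^3x_3,\ x_1\ne0,\ \gcd(x_1,x_2,x_3)=1,\ |x_i|\le B\ (1\le i\le3),\ |x_0|\le B^2\}$. *)

theory Defs
  imports Complex_Main "HOL-Library.Landau_Symbols"
begin

definition NU_set :: "real \<Rightarrow> (int \<times> int \<times> int \<times> int) set" where
  "NU_set B = {(x0, x1, x2, x3).
      x0^2 = x1 * x2^3 + x1^3 * x3 \<and> x1 \<noteq> 0 \<and> gcd x1 (gcd x2 x3) = 1 \<and>
      real_of_int \<bar>x1\<bar> \<le> B \<and> real_of_int \<bar>x2\<bar> \<le> B \<and> real_of_int \<bar>x3\<bar> \<le> B \<and>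
      real_of_int \<bar>x0\<bar> \<le> B^2}"

definition N_U :: "real \<Rightarrow> real" where
  "N_U B = real (card (NU_set B)) / 2"

definition torsor_cond :: "real \<Rightarrow> int \<Rightarrow> int \<Rightarrow> int \<Rightarrow> int \<Rightarrow> int \<Rightarrow> int \<Rightarrow> int \<Rightarrow> int
    \<Rightarrow> int \<Rightarrow> int \<Rightarrow> int \<Rightarrow> bool" where
  "torsor_cond B e1 e2 e3 e4 e5 e6 e7 e8 a1 a2 a3 \<longleftrightarrow>
     e1^2 * e2 * a1^3 + e7 * a2^2 + e4 * e5^2 * e6^3 * e8^4 * a3 = 0 \<and>
     e1 \<ge> 1 \<and> e2 \<ge> 1 \<and> e3 \<ge> 1 \<and> e4 \<ge> 1 \<and> e5 \<ge> 1 \<and> e6 \<ge> 1 \<and> e7 \<ge> 1 \<and> e8 \<ge> 1 \<and>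
     a2 \<ge> 1 \<and>
     real_of_int (e1^2 * e2^4 * e3^6 * e4^5 * e5^4 * e6^3 * e7^3 * e8^2) \<le> B \<and>
     real_of_int \<bar>e1^2 * e2^3 * e3^4 * e4^3 * e5^2 * e6 * e7^2 * a1\<bar> \<le> B \<and>
     real_of_int \<bar>a3\<bar> \<le> B \<and>
     real_of_int (e1^3 * e2^6 * e3^9 * e4^7 * e5^5 * e6^3 * e7^5 * e8 * a2) \<le> B^2 \<and>
     gcd a1 (e2 * e3 * e4 * e5 * e6 * e7 * e8) = 1 \<and>
     gcd a2 (e1 * e2 * e3 * e4 * e5 * e6 * e8) = 1 \<and>
     gcd a3 (e1 * e2 * e3 * e4 * e5 * e6 * e7) = 1 \<and>
     gcd e8 (e1 * e2 * e3 * e4 * e5 * e7) = 1 \<and>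
     gcd e7 (e1 * e2 * e4 * e5 * e6) = 1 \<and>
     gcd e6 (e1 * e2 * e3 * e4) = 1 \<and>
     gcd e5 (e1 * e2 * e3) = 1 \<and>
     gcd e4 (e1 * e2) = 1 \<and>
     gcd e3 e1 = 1"

definition N_set :: "real \<Rightarrow> (int \<times> int \<times> int \<times> int \<times> int \<times> int \<times> int \<times> int \<times> int \<times> int \<times> int) set" where
  "N_set B = {(e1, e2, e3, e4, e5, e6, e7, e8, a1, a2, a3).
      torsor_cond B e1 e2 e3 e4 e5 e6 e7 e8 a1 a2 a3}"

definition calN :: "real \<Rightarrow> real" where
  "calN B = real (card (N_set B))"

end

theory Submission
  imports Defs "HOL-Computational_Algebra.Squarefree" "HOL-Computational_Algebra.Nth_Powers"
begin

(* We compare the primitive points of the surface  x0^2 = x1 x2^3 + x1^3 x3  with its universal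
   torsor.  The sign changes (x0, x1, x2, x3) -> (x0, -x1, -x2, -x3) and x0 -> -x0 preserve the point set
   counted by N_U, so N_U(B) = 2 |Splus B| + |Zplus B|, where Splus consists of the points with x1 > 0 and
   x0 > 0 and Zplus of those with x1 > 0 and x0 = 0.

   The main step is that the monomial map Phi from torsor points (e1, ..., e8, a1, a2, a3) to the surface
   is a bijection from N_set B onto Splus B, so calN(B) = |Splus B|.  It is proved one prime p at a time:
   the coprimality conditions of the torsor say that the exponent vector (v_p e1, ..., v_p e8) is
   "admissible" (its support is a vertex or an edge of the tree 8-6-5-4-3-2-1 with 7 attached to 3), the
   valuations of (x1, x2, x0) are linear forms in it, and explicit piecewise linear functions loc_exp_i
   recover it from those valuations.  Conversely every valuation triple of a point of Splus arises this
   way, which yields the inverse map Psi, assembling each e_i as a product of prime powers.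

   Finally, points with x0 = 0 satisfy x2^3 = x1^2 (-x3) with x1, x3 coprime, hence are parametrised by
   two integers of size at most B^(1/3); this gives |Zplus B| <= 9 B^(2/3) and the theorem. *)

section \<open>Local combinatorics of exponent vectors\<close>

lemma tuple8_cases:
  obtains x1 x2 x3 x4 x5 x6 x7 x8 where "t = (x1, x2, x3, x4, x5, x6, x7, x8)"
  by (metis prod.collapse)

(* An exponent vector (E1, ..., E8) records the p-adic valuations of e1, ..., e8 at one prime p. *)
type_synonym expvec = "nat \<times> nat \<times> nat \<times> nat \<times> nat \<times> nat \<times> nat \<times> nat"

(* The local form of the coprimality conditions among e1, ..., e8: the indices i with Ei > 0
   form a vertex or an edge of the tree 8-6-5-4-3-2-1 with 7 attached to 3. *)
fun adjacent_support :: "expvec \<Rightarrow> bool" where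
  "adjacent_support (E1, E2, E3, E4, E5, E6, E7, E8) \<longleftrightarrow>
     (E8 = 0 \<or> E1 = 0 \<and> E2 = 0 \<and> E3 = 0 \<and> E4 = 0 \<and> E5 = 0 \<and> E7 = 0) \<and>
     (E7 = 0 \<or> E1 = 0 \<and> E2 = 0 \<and> E4 = 0 \<and> E5 = 0 \<and> E6 = 0) \<and>
     (E6 = 0 \<or> E1 = 0 \<and> E2 = 0 \<and> E3 = 0 \<and> E4 = 0) \<and>
     (E5 = 0 \<or> E1 = 0 \<and> E2 = 0 \<and> E3 = 0) \<and>
     (E4 = 0 \<or> E1 = 0 \<and> E2 = 0) \<and>
     (E3 = 0 \<or> E1 = 0)"

(* Adding the coprimality conditions of a1 and a2: A1 and A2 stand for the valuations of a1 and
   a2 (only whether they vanish matters); a1 is attached to vertex 1 and a2 to vertex 7. *)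
fun admissible :: "expvec \<Rightarrow> nat \<Rightarrow> nat \<Rightarrow> bool" where
  "admissible (E1, E2, E3, E4, E5, E6, E7, E8) A1 A2 \<longleftrightarrow>
     adjacent_support (E1, E2, E3, E4, E5, E6, E7, E8) \<and>
     (A1 = 0 \<or> E2 = 0 \<and> E3 = 0 \<and> E4 = 0 \<and> E5 = 0 \<and> E6 = 0 \<and> E7 = 0 \<and> E8 = 0) \<and>
     (A2 = 0 \<or> E1 = 0 \<and> E2 = 0 \<and> E3 = 0 \<and> E4 = 0 \<and> E5 = 0 \<and> E6 = 0 \<and> E8 = 0)"

(* Valuations of the monomials x1 = e1^2 e2^4 ... e8^2, of x2 / a1 and of x0 / a2 in terms of the
   exponent vector. *)
fun deg_x1 :: "expvec \<Rightarrow> nat" where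
  "deg_x1 (E1, E2, E3, E4, E5, E6, E7, E8) = 2*E1 + 4*E2 + 6*E3 + 5*E4 + 4*E5 + 3*E6 + 3*E7 + 2*E8"

fun deg_x2 :: "expvec \<Rightarrow> nat" where
  "deg_x2 (E1, E2, E3, E4, E5, E6, E7, E8) = 2*E1 + 3*E2 + 4*E3 + 3*E4 + 2*E5 + E6 + 2*E7"

fun deg_x0 :: "expvec \<Rightarrow> nat" where
  "deg_x0 (E1, E2, E3, E4, E5, E6, E7, E8) = 3*E1 + 6*E2 + 9*E3 + 7*E4 + 5*E5 + 3*E6 + 5*E7 + E8"

(* The inverse of the map E |-> (deg_x1 E, deg_x2 E + A1, deg_x0 E + A2) on admissible
   vectors: the i-th local exponent as a piecewise linear function of the valuation triple (a, b, d). *)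
definition loc_exp1 :: "nat \<Rightarrow> nat \<Rightarrow> nat \<Rightarrow> nat" where
  "loc_exp1 a b d = (if 4*b \<le> 3*a then 0 else if b \<le> a then (4*b - 3*a) div 2 else a div 2)"

definition loc_exp2 :: "nat \<Rightarrow> nat \<Rightarrow> nat \<Rightarrow> nat" where
  "loc_exp2 a b d = (if 3*b \<le> 2*a then 0 else if 4*b \<le> 3*a then 3*b - 2*a else if b \<le> a then a - b else 0)"

definition loc_exp3 :: "nat \<Rightarrow> nat \<Rightarrow> nat \<Rightarrow> nat" where
  "loc_exp3 a b d =
     (if 5*b \<le> 3*a then 0 else if 3*b < 2*a then (5*b - 3*a) div 2
      else if 3*b = 2*a then (a div 3 - min (a div 3) (2*d - 3*a)) div 2
      else if 4*b \<le> 3*a then (3*a - 4*b) div 2 else 0)"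

definition loc_exp4 :: "nat \<Rightarrow> nat \<Rightarrow> nat \<Rightarrow> nat" where
  "loc_exp4 a b d = (if 2*b \<le> a then 0 else if 5*b \<le> 3*a then 2*b - a else if 3*b < 2*a then 2*a - 3*b else 0)"

definition loc_exp5 :: "nat \<Rightarrow> nat \<Rightarrow> nat \<Rightarrow> nat" where
  "loc_exp5 a b d =
     (if 3*b \<le> a then 0 else if 2*b \<le> a then (3*b - a) div 2 else if 5*b \<le> 3*a then (3*a - 5*b) div 2 else 0)"

definition loc_exp6 :: "nat \<Rightarrow> nat \<Rightarrow> nat \<Rightarrow> nat" where
  "loc_exp6 a b d = (if 3*b \<le> a then b else if 2*b \<le> a then a - 2*b else 0)"

definition loc_exp7 :: "nat \<Rightarrow> nat \<Rightarrow> nat \<Rightarrow> nat" where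
  "loc_exp7 a b d = (if 3*b = 2*a then min (a div 3) (2*d - 3*a) else 0)"

definition loc_exp8 :: "nat \<Rightarrow> nat \<Rightarrow> nat \<Rightarrow> nat" where
  "loc_exp8 a b d = (if 3*b \<le> a then (a - 3*b) div 2 else 0)"

definition local_exps :: "nat \<Rightarrow> nat \<Rightarrow> nat \<Rightarrow> expvec" where
  "local_exps a b d =
     (loc_exp1 a b d, loc_exp2 a b d, loc_exp3 a b d, loc_exp4 a b d,
      loc_exp5 a b d, loc_exp6 a b d, loc_exp7 a b d, loc_exp8 a b d)"

lemmas local_exps_simps = local_exps_def loc_exp1_def loc_exp2_def loc_exp3_def loc_exp4_def
  loc_exp5_def loc_exp6_def loc_exp7_def loc_exp8_def

lemma admissible_cases:
  assumes "admissible (E1, E2, E3, E4, E5, E6, E7, E8) A1 A2"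
  obtains
    "E1 = 0" "E2 = 0" "E3 = 0" "E4 = 0" "E5 = 0" "E7 = 0" "A1 = 0" "A2 = 0"
  | "E1 = 0" "E2 = 0" "E3 = 0" "E4 = 0" "E7 = 0" "E8 = 0" "A1 = 0" "A2 = 0"
  | "E1 = 0" "E2 = 0" "E3 = 0" "E6 = 0" "E7 = 0" "E8 = 0" "A1 = 0" "A2 = 0"
  | "E1 = 0" "E2 = 0" "E5 = 0" "E6 = 0" "E7 = 0" "E8 = 0" "A1 = 0" "A2 = 0"
  | "E1 = 0" "E2 = 0" "E4 = 0" "E5 = 0" "E6 = 0" "E8 = 0" "A1 = 0" "A2 = 0"
  | "E1 = 0" "E2 = 0" "E3 = 0" "E4 = 0" "E5 = 0" "E6 = 0" "E8 = 0" "A1 = 0"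
  | "E1 = 0" "E4 = 0" "E5 = 0" "E6 = 0" "E7 = 0" "E8 = 0" "A1 = 0" "A2 = 0"
  | "E3 = 0" "E4 = 0" "E5 = 0" "E6 = 0" "E7 = 0" "E8 = 0" "A1 = 0" "A2 = 0"
  | "E2 = 0" "E3 = 0" "E4 = 0" "E5 = 0" "E6 = 0" "E7 = 0" "E8 = 0" "A2 = 0"
  | "E1 = 0" "E2 = 0" "E3 = 0" "E4 = 0" "E5 = 0" "E6 = 0" "E7 = 0" "E8 = 0"
  using assms by auto

(* On every cone the local exponent functions are linear and invert the valuation map, so
   admissible vectors are determined by their valuation triples. *)
lemma local_exps_admissible:
  assumes "admissible E A1 A2"
  shows "local_exps (deg_x1 E) (deg_x2 E + A1) (deg_x0 E + A2) = E"
proof -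
  obtain E1 E2 E3 E4 E5 E6 E7 E8 where E: "E = (E1, E2, E3, E4, E5, E6, E7, E8)"
    by (rule tuple8_cases)
  from assms show ?thesis
    unfolding E
  proof (rule admissible_cases)
  qed (simp_all add: local_exps_simps)
qed

(* The restriction on valuation triples coming from the surface equation (see
   surface_valuation_constraint below). *)
definition valuation_constraint :: "nat \<Rightarrow> nat \<Rightarrow> nat \<Rightarrow> bool" where
  "valuation_constraint a b d \<longleftrightarrow> 0 < a \<longrightarrow>
     (3*b < 2*a \<longrightarrow> 2*d = a + 3*b) \<and> (3*b = 2*a \<longrightarrow> 3*a \<le> 2*d) \<and> (2*a < 3*b \<longrightarrow> 2*d = 3*a)"

lemma admissible_decomposition:
  assumes "valuation_constraint a b d"
  shows "\<exists>E A1 A2. admissible E A1 A2 \<and> a = deg_x1 E \<and> b = deg_x2 E + A1 \<and> d = deg_x0 E + A2"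
proof -
  have witness: "?thesis" if "admissible E A1 A2 \<and> a = deg_x1 E \<and> b = deg_x2 E + A1 \<and> d = deg_x0 E + A2"
    for E A1 A2
    using that by blast
  show ?thesis
  proof (cases "a = 0")
    case True
    then show ?thesis by (intro witness[of "(0, 0, 0, 0, 0, 0, 0, 0)" b d]) simp
  next
    case False
    then have C: "3*b < 2*a \<Longrightarrow> 2*d = a + 3*b" "3*b = 2*a \<Longrightarrow> 3*a \<le> 2*d" "2*a < 3*b \<Longrightarrow> 2*d = 3*a"
      using assms unfolding valuation_constraint_def by simp_all
    consider "3*b \<le> a" | "a < 3*b" "2*b \<le> a" | "a < 2*b" "5*b \<le> 3*a" | "3*a < 5*b" "3*b < 2*a"
      | "3*b = 2*a" "2*d \<le> 10*(a-b)" | "3*b = 2*a" "10*(a-b) < 2*d" | "2*a < 3*b" "4*b \<le> 3*a"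
      | "3*a < 4*b" "b \<le> a" | "a < b"
      by linarith
    then show ?thesis
    proof cases
      case 1 show ?thesis
        by (intro witness[of "(0, 0, 0, 0, 0, b, 0, d - 3*b)" 0 0]) (use C 1 False in auto)
    next
      case 2 show ?thesis
        by (intro witness[of "(0, 0, 0, 0, d - a, a - 2*b, 0, 0)" 0 0]) (use C 2 False in auto)
    next
      case 3 show ?thesis
        by (intro witness[of "(0, 0, 0, 2*b - a, d + a - 4*b, 0, 0, 0)" 0 0]) (use C 3 False in auto)
    next
      case 4 show ?thesis
        by (intro witness[of "(0, 0, d + b - 2*a, 2*a - 3*b, 0, 0, 0, 0)" 0 0]) (use C 4 False in auto)
    next
      case 5 show ?thesis
        by (intro witness[of "(0, 0, 5*(a-b) - d, 0, 0, 0, 2*d - 9*(a-b), 0)" 0 0]) (use C 5 False in auto)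
    next
      case 6 show ?thesis
        by (intro witness[of "(0, 0, 0, 0, 0, 0, a - b, 0)" 0 "d - 5*(a-b)"]) (use C 6 False in auto)
    next
      case 7 show ?thesis
        by (intro witness[of "(0, 3*b - 2*a, d - 2*b, 0, 0, 0, 0, 0)" 0 0]) (use C 7 False in auto)
    next
      case 8 show ?thesis
        by (intro witness[of "(2*b - d, a - b, 0, 0, 0, 0, 0, 0)" 0 0]) (use C 8 False in auto)
    next
      case 9 show ?thesis
        by (intro witness[of "(d - a, 0, 0, 0, 0, 0, 0, 0)" "b - a" 0]) (use C 9 False in auto)
    qed
  qed
qed

lemma local_exps_constraint:
  assumes "valuation_constraint a b d"
  defines "E \<equiv> local_exps a b d"
  obtains A1 A2 where "admissible E A1 A2"
    and "a = deg_x1 E" and "b = deg_x2 E + A1" and "d = deg_x0 E + A2"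
proof -
  obtain E' A1 A2 where E': "admissible E' A1 A2" "a = deg_x1 E'" "b = deg_x2 E' + A1" "d = deg_x0 E' + A2"
    using admissible_decomposition[OF assms(1)] by blast
  then have "E = E'" unfolding E_def using local_exps_admissible by metis
  with E' show thesis by (intro that) simp_all
qed

section \<open>Valuations of points on the surface\<close>

lemma prime_dvd_iff_multiplicity_pos:
  fixes p x :: int
  assumes "prime p" "x \<noteq> 0"
  shows "p dvd x \<longleftrightarrow> 0 < multiplicity p x"
  using prime_multiplicity_gt_zero_iff[OF prime_imp_prime_elem[OF assms(1)] assms(2)] by simp

lemma coprime_iff_no_common_prime:
  fixes x y :: int
  shows "coprime x y \<longleftrightarrow> (\<forall>p. prime p \<longrightarrow> p dvd x \<longrightarrow> \<not> p dvd y)"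
proof
  assume "coprime x y"
  then show "\<forall>p. prime p \<longrightarrow> p dvd x \<longrightarrow> \<not> p dvd y"
    using coprime_common_divisor not_prime_unit by blast
next
  assume no_common: "\<forall>p. prime p \<longrightarrow> p dvd x \<longrightarrow> \<not> p dvd y"
  show "coprime x y"
  proof (rule coprimeI)
    fix c assume c: "c dvd x" "c dvd y"
    show "is_unit c"
    proof (rule ccontr)
      assume "\<not> is_unit c"
      moreover have "c \<noteq> 0"
        using c no_common[rule_format, of 2] by auto
      ultimately obtain p where "prime p" "p dvd c"
        using prime_divisor_exists by blast
      then show False using c no_common dvd_trans by blast
    qed
  qed
qed

lemma gcd3_eq_1_iff:
  fixes x1 x2 x3 :: int
  shows "gcd x1 (gcd x2 x3) = 1 \<longleftrightarrow> (\<forall>p. prime p \<longrightarrow> p dvd x1 \<longrightarrow> p dvd x2 \<longrightarrow> \<not> p dvd x3)"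
  unfolding coprime_iff_gcd_eq_1[symmetric] coprime_iff_no_common_prime by auto

lemma multiplicity_sum_ultrametric:
  fixes p s t :: int
  assumes p: "prime p" and s: "s \<noteq> 0" and st: "s + t \<noteq> 0"
  shows "t = 0 \<or> multiplicity p s < multiplicity p t \<Longrightarrow> multiplicity p (s + t) = multiplicity p s"
    and "t \<noteq> 0 \<Longrightarrow> multiplicity p t < multiplicity p s \<Longrightarrow> multiplicity p (s + t) = multiplicity p t"
    and "multiplicity p t = multiplicity p s \<Longrightarrow> multiplicity p s \<le> multiplicity p (s + t)"
proof -
  show "t = 0 \<or> multiplicity p s < multiplicity p t \<Longrightarrow> multiplicity p (s + t) = multiplicity p s"
    using s by (auto intro: multiplicity_sum_lt)
  show "t \<noteq> 0 \<Longrightarrow> multiplicity p t < multiplicity p s \<Longrightarrow> multiplicity p (s + t) = multiplicity p t"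
    using s multiplicity_sum_lt[of p t s] by (simp add: add.commute)
  assume "multiplicity p t = multiplicity p s"
  then have "p ^ multiplicity p s dvd s + t" by (metis dvd_add multiplicity_dvd)
  then show "multiplicity p s \<le> multiplicity p (s + t)"
    using p st by (intro multiplicity_geI) auto
qed

(* The valuation of x2; for x2 = 0 any value above v_p(x1) does, and v_p(x1) + 1 is the one
   matching the local exponent functions. *)
definition val_x2 :: "int \<Rightarrow> int \<Rightarrow> int \<Rightarrow> nat" where
  "val_x2 p x1 x2 = (if x2 = 0 then multiplicity p x1 + 1 else multiplicity p x2)"

(* On a primitive point of the surface, comparing valuations of the two terms of
   x1 x2^3 + x1^3 x3 = x0^2 shows that the valuation triple satisfies the constraint. *)
lemma surface_valuation_constraint:
  fixes x0 x1 x2 x3 p :: int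
  assumes eq: "x0^2 = x1 * x2^3 + x1^3 * x3" and nz: "x0 \<noteq> 0" "x1 \<noteq> 0"
    and cop: "gcd x1 (gcd x2 x3) = 1" and p: "prime p"
  shows "valuation_constraint (multiplicity p x1) (val_x2 p x1 x2) (multiplicity p x0)"
  unfolding valuation_constraint_def
proof (intro impI)
  define a where "a = multiplicity p x1"
  define b where "b = val_x2 p x1 x2"
  define d where "d = multiplicity p x0"
  have pe: "prime_elem p" using p by (rule prime_imp_prime_elem)
  assume "0 < multiplicity p x1"
  then have "p dvd x1" using p nz by (simp add: prime_dvd_iff_multiplicity_pos)
  then have x3_coprime: "\<not> p dvd x3" if "p dvd x2" using that cop p by (auto simp: gcd3_eq_1_iff)
  have sum_ne: "x1 * x2^3 + x1^3 * x3 \<noteq> 0" using eq nz by (metis power_not_zero)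
  have d2: "multiplicity p (x1 * x2^3 + x1^3 * x3) = 2*d"
    unfolding eq[symmetric] d_def using nz pe by (simp add: prime_elem_multiplicity_power_distrib)
  have v_t: "multiplicity p (x1^3 * x3) = 3*a + multiplicity p x3" if "x3 \<noteq> 0"
    using that nz pe unfolding a_def
    by (simp add: prime_elem_multiplicity_mult_distrib prime_elem_multiplicity_power_distrib)
  have v_t_coprime: "multiplicity p (x1^3 * x3) = 3*a" "x3 \<noteq> 0" if "p dvd x2"
    using v_t x3_coprime[OF that] by (auto simp: not_dvd_imp_multiplicity_0)
  show "(3*b < 2*a \<longrightarrow> 2*d = a + 3*b) \<and> (3*b = 2*a \<longrightarrow> 3*a \<le> 2*d) \<and> (2*a < 3*b \<longrightarrow> 2*d = 3*a)"
  proof (cases "x2 = 0")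
    case True
    then have "2*d = 3*a" using d2 v_t_coprime by simp
    moreover have "b = a + 1" using True unfolding a_def b_def val_x2_def by simp
    ultimately show ?thesis by simp
  next
    case False
    then have b: "b = multiplicity p x2" unfolding b_def val_x2_def by simp
    have v_s: "multiplicity p (x1 * x2^3) = a + 3*b" and s_ne: "x1 * x2^3 \<noteq> 0"
      using False nz pe unfolding a_def b
      by (simp_all add: prime_elem_multiplicity_mult_distrib prime_elem_multiplicity_power_distrib)
    have "p dvd x2" if "0 < b" using that False p b by (simp add: prime_dvd_iff_multiplicity_pos)
    note ultra = multiplicity_sum_ultrametric[OF p s_ne sum_ne]
    show ?thesis
    proof (intro conjI impI)
      assume "3*b < 2*a"
      then have "x1^3 * x3 = 0 \<or> multiplicity p (x1 * x2^3) < multiplicity p (x1^3 * x3)"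
        using v_s v_t by (cases "x3 = 0") auto
      then show "2*d = a + 3*b" using ultra(1) d2 v_s by simp
    next
      assume "3*b = 2*a"
      then show "3*a \<le> 2*d"
        using ultra(3) d2 v_s v_t_coprime \<open>0 < b \<Longrightarrow> p dvd x2\<close> \<open>0 < multiplicity p x1\<close>
        by (simp add: a_def)
    next
      assume "2*a < 3*b"
      then show "2*d = 3*a"
        using ultra(2) d2 v_s v_t_coprime \<open>0 < b \<Longrightarrow> p dvd x2\<close> nz by simp
    qed
  qed
qed

lemma val_x2_eq_0_if_dvd_x3:
  fixes x1 x2 x3 p :: int
  assumes "gcd x1 (gcd x2 x3) = 1" "prime p" "p dvd x1" "p dvd x3"
  shows "val_x2 p x1 x2 = 0"
proof -
  have "\<not> p dvd x2" using assms by (auto simp: gcd3_eq_1_iff)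
  then have "x2 \<noteq> 0" by auto
  with \<open>\<not> p dvd x2\<close> show ?thesis by (simp add: val_x2_def not_dvd_imp_multiplicity_0)
qed

section \<open>Integer vectors and the monomials of the torsor map\<close>

type_synonym intvec = "int \<times> int \<times> int \<times> int \<times> int \<times> int \<times> int \<times> int"

fun pos_vec :: "intvec \<Rightarrow> bool" where
  "pos_vec (e1, e2, e3, e4, e5, e6, e7, e8) \<longleftrightarrow>
     0 < e1 \<and> 0 < e2 \<and> 0 < e3 \<and> 0 < e4 \<and> 0 < e5 \<and> 0 < e6 \<and> 0 < e7 \<and> 0 < e8"

fun vals :: "int \<Rightarrow> intvec \<Rightarrow> expvec" where
  "vals p (e1, e2, e3, e4, e5, e6, e7, e8) =
     (multiplicity p e1, multiplicity p e2, multiplicity p e3, multiplicity p e4,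
      multiplicity p e5, multiplicity p e6, multiplicity p e7, multiplicity p e8)"

fun mono_x1 :: "intvec \<Rightarrow> int" where
  "mono_x1 (e1, e2, e3, e4, e5, e6, e7, e8) = e1^2 * e2^4 * e3^6 * e4^5 * e5^4 * e6^3 * e7^3 * e8^2"

fun mono_x2 :: "intvec \<Rightarrow> int" where
  "mono_x2 (e1, e2, e3, e4, e5, e6, e7, e8) = e1^2 * e2^3 * e3^4 * e4^3 * e5^2 * e6 * e7^2"

fun mono_x0 :: "intvec \<Rightarrow> int" where
  "mono_x0 (e1, e2, e3, e4, e5, e6, e7, e8) = e1^3 * e2^6 * e3^9 * e4^7 * e5^5 * e6^3 * e7^5 * e8"

lemma monomials_pos:
  assumes "pos_vec e"
  shows "0 < mono_x1 e" "0 < mono_x2 e" "0 < mono_x0 e"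
proof -
  obtain e1 e2 e3 e4 e5 e6 e7 e8 where "e = (e1, e2, e3, e4, e5, e6, e7, e8)"
    by (rule tuple8_cases)
  with assms show "0 < mono_x1 e" "0 < mono_x2 e" "0 < mono_x0 e" by simp_all
qed

lemma multiplicity_monomials:
  assumes "pos_vec e" "prime p"
  shows "multiplicity p (mono_x1 e) = deg_x1 (vals p e)"
    and "multiplicity p (mono_x2 e) = deg_x2 (vals p e)"
    and "multiplicity p (mono_x0 e) = deg_x0 (vals p e)"
proof -
  have pe: "prime_elem p" using assms(2) by (rule prime_imp_prime_elem)
  obtain e1 e2 e3 e4 e5 e6 e7 e8 where e: "e = (e1, e2, e3, e4, e5, e6, e7, e8)"
    by (rule tuple8_cases)
  show "multiplicity p (mono_x1 e) = deg_x1 (vals p e)"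
    "multiplicity p (mono_x2 e) = deg_x2 (vals p e)"
    "multiplicity p (mono_x0 e) = deg_x0 (vals p e)"
    using assms(1) unfolding e
    by (simp_all add: prime_elem_multiplicity_mult_distrib[OF pe] prime_elem_multiplicity_power_distrib[OF pe])
qed

definition torsor_coprime ::
    "int \<Rightarrow> int \<Rightarrow> int \<Rightarrow> int \<Rightarrow> int \<Rightarrow> int \<Rightarrow> int \<Rightarrow> int \<Rightarrow> int \<Rightarrow> int \<Rightarrow> int \<Rightarrow> bool" where
  "torsor_coprime e1 e2 e3 e4 e5 e6 e7 e8 a1 a2 a3 \<longleftrightarrow>
     gcd a1 (e2 * e3 * e4 * e5 * e6 * e7 * e8) = 1 \<and>
     gcd a2 (e1 * e2 * e3 * e4 * e5 * e6 * e8) = 1 \<and>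
     gcd a3 (e1 * e2 * e3 * e4 * e5 * e6 * e7) = 1 \<and>
     gcd e8 (e1 * e2 * e3 * e4 * e5 * e7) = 1 \<and>
     gcd e7 (e1 * e2 * e4 * e5 * e6) = 1 \<and>
     gcd e6 (e1 * e2 * e3 * e4) = 1 \<and>
     gcd e5 (e1 * e2 * e3) = 1 \<and>
     gcd e4 (e1 * e2) = 1 \<and>
     gcd e3 e1 = 1"

lemma admissible_iff_local_coprime:
  fixes E1 E2 E3 E4 E5 E6 E7 E8 :: nat
  shows "admissible (E1, E2, E3, E4, E5, E6, E7, E8) (of_bool P1) (of_bool P2) \<and>
           (P3 \<longrightarrow> deg_x2 (E1, E2, E3, E4, E5, E6, E7, E8) = 0) \<longleftrightarrow>
         (P1 \<longrightarrow> E2 = 0 \<and> E3 = 0 \<and> E4 = 0 \<and> E5 = 0 \<and> E6 = 0 \<and> E7 = 0 \<and> E8 = 0) \<and>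
         (P2 \<longrightarrow> E1 = 0 \<and> E2 = 0 \<and> E3 = 0 \<and> E4 = 0 \<and> E5 = 0 \<and> E6 = 0 \<and> E8 = 0) \<and>
         (P3 \<longrightarrow> E1 = 0 \<and> E2 = 0 \<and> E3 = 0 \<and> E4 = 0 \<and> E5 = 0 \<and> E6 = 0 \<and> E7 = 0) \<and>
         (E8 \<noteq> 0 \<longrightarrow> E1 = 0 \<and> E2 = 0 \<and> E3 = 0 \<and> E4 = 0 \<and> E5 = 0 \<and> E7 = 0) \<and>
         (E7 \<noteq> 0 \<longrightarrow> E1 = 0 \<and> E2 = 0 \<and> E4 = 0 \<and> E5 = 0 \<and> E6 = 0) \<and>
         (E6 \<noteq> 0 \<longrightarrow> E1 = 0 \<and> E2 = 0 \<and> E3 = 0 \<and> E4 = 0) \<and>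
         (E5 \<noteq> 0 \<longrightarrow> E1 = 0 \<and> E2 = 0 \<and> E3 = 0) \<and>
         (E4 \<noteq> 0 \<longrightarrow> E1 = 0 \<and> E2 = 0) \<and> (E3 \<noteq> 0 \<longrightarrow> E1 = 0)"
  by auto

lemma torsor_coprime_iff_local:
  assumes "pos_vec (e1, e2, e3, e4, e5, e6, e7, e8)"
  defines "e \<equiv> (e1, e2, e3, e4, e5, e6, e7, e8)"
  shows "torsor_coprime e1 e2 e3 e4 e5 e6 e7 e8 a1 a2 a3 \<longleftrightarrow>
    (\<forall>p. prime p \<longrightarrow> admissible (vals p e) (of_bool (p dvd a1)) (of_bool (p dvd a2)) \<and>
                      (p dvd a3 \<longrightarrow> deg_x2 (vals p e) = 0))" (is "_ \<longleftrightarrow> ?rhs")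
proof -
  have dvd_iff: "p dvd e1 \<longleftrightarrow> multiplicity p e1 \<noteq> 0" "p dvd e2 \<longleftrightarrow> multiplicity p e2 \<noteq> 0"
    "p dvd e3 \<longleftrightarrow> multiplicity p e3 \<noteq> 0" "p dvd e4 \<longleftrightarrow> multiplicity p e4 \<noteq> 0"
    "p dvd e5 \<longleftrightarrow> multiplicity p e5 \<noteq> 0" "p dvd e6 \<longleftrightarrow> multiplicity p e6 \<noteq> 0"
    "p dvd e7 \<longleftrightarrow> multiplicity p e7 \<noteq> 0" "p dvd e8 \<longleftrightarrow> multiplicity p e8 \<noteq> 0"
    if "prime p" for p
    using assms(1) that by (simp_all add: prime_dvd_iff_multiplicity_pos)
  have "torsor_coprime e1 e2 e3 e4 e5 e6 e7 e8 a1 a2 a3 \<longleftrightarrow>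
    (\<forall>p. prime p \<longrightarrow> (p dvd a1 \<longrightarrow> \<not> p dvd e2 * e3 * e4 * e5 * e6 * e7 * e8) \<and>
       (p dvd a2 \<longrightarrow> \<not> p dvd e1 * e2 * e3 * e4 * e5 * e6 * e8) \<and>
       (p dvd a3 \<longrightarrow> \<not> p dvd e1 * e2 * e3 * e4 * e5 * e6 * e7) \<and>
       (p dvd e8 \<longrightarrow> \<not> p dvd e1 * e2 * e3 * e4 * e5 * e7) \<and>
       (p dvd e7 \<longrightarrow> \<not> p dvd e1 * e2 * e4 * e5 * e6) \<and>
       (p dvd e6 \<longrightarrow> \<not> p dvd e1 * e2 * e3 * e4) \<and>
       (p dvd e5 \<longrightarrow> \<not> p dvd e1 * e2 * e3) \<and>
       (p dvd e4 \<longrightarrow> \<not> p dvd e1 * e2) \<and>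
       (p dvd e3 \<longrightarrow> \<not> p dvd e1))"
    unfolding torsor_coprime_def coprime_iff_gcd_eq_1[symmetric] coprime_iff_no_common_prime
    by blast
  also have "\<dots> \<longleftrightarrow> ?rhs"
    unfolding e_def vals.simps
    by (intro all_cong1 imp_cong refl, subst admissible_iff_local_coprime)
      (simp only: prime_dvd_mult_iff dvd_iff de_Morgan_disj not_not conj_assoc)
  finally show ?thesis .
qed

lemma admissible_cong:
  assumes "A1 = 0 \<longleftrightarrow> A1' = 0" "A2 = 0 \<longleftrightarrow> A2' = 0"
  shows "admissible E A1 A2 \<longleftrightarrow> admissible E A1' A2'"
  using assms by (cases E rule: tuple8_cases) simp

lemma deg_x2_le_deg_x1: "deg_x2 E \<le> deg_x1 E"
  by (cases E rule: tuple8_cases) simp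

(* If a1 has positive valuation, only E1 can be non-zero. *)
lemma admissible_A1_pos:
  assumes "admissible E A1 A2" "0 < A1"
  shows "deg_x1 E = deg_x2 E"
  using assms by (cases E rule: tuple8_cases) simp

section \<open>The torsor map and its inverse\<close>

fun in_box :: "real \<Rightarrow> int \<times> int \<times> int \<times> int \<Rightarrow> bool" where
  "in_box B (x0, x1, x2, x3) \<longleftrightarrow>
     real_of_int \<bar>x1\<bar> \<le> B \<and> real_of_int \<bar>x2\<bar> \<le> B \<and> real_of_int \<bar>x3\<bar> \<le> B \<and> real_of_int \<bar>x0\<bar> \<le> B^2"

definition Splus :: "real \<Rightarrow> (int \<times> int \<times> int \<times> int) set" where
  "Splus B = {(x0, x1, x2, x3). (x0, x1, x2, x3) \<in> NU_set B \<and> 0 < x1 \<and> 0 < x0}"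

lemma mem_Splus:
  "(x0, x1, x2, x3) \<in> Splus B \<longleftrightarrow>
     x0^2 = x1 * x2^3 + x1^3 * x3 \<and> 0 < x1 \<and> 0 < x0 \<and> gcd x1 (gcd x2 x3) = 1 \<and>
     in_box B (x0, x1, x2, x3)"
  unfolding Splus_def NU_set_def by auto

definition Phi :: "int \<times> int \<times> int \<times> int \<times> int \<times> int \<times> int \<times> int \<times> int \<times> int \<times> int
    \<Rightarrow> int \<times> int \<times> int \<times> int" where
  "Phi = (\<lambda>(e1, e2, e3, e4, e5, e6, e7, e8, a1, a2, a3).
     let e = (e1, e2, e3, e4, e5, e6, e7, e8)
     in (mono_x0 e * a2, mono_x1 e, - (mono_x2 e * a1), - a3))"

lemma torsor_cond_iff:
  "torsor_cond B e1 e2 e3 e4 e5 e6 e7 e8 a1 a2 a3 \<longleftrightarrow>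
     e1^2 * e2 * a1^3 + e7 * a2^2 + e4 * e5^2 * e6^3 * e8^4 * a3 = 0 \<and>
     pos_vec (e1, e2, e3, e4, e5, e6, e7, e8) \<and> 0 < a2 \<and>
     torsor_coprime e1 e2 e3 e4 e5 e6 e7 e8 a1 a2 a3 \<and>
     in_box B (Phi (e1, e2, e3, e4, e5, e6, e7, e8, a1, a2, a3))"
  unfolding torsor_cond_def torsor_coprime_def Phi_def
  by (auto simp: abs_mult)

lemma surface_identity:
  fixes e1 e2 e3 e4 e5 e6 e7 e8 a1 a2 a3 :: int
  defines "e \<equiv> (e1, e2, e3, e4, e5, e6, e7, e8)"
  shows "(mono_x0 e * a2)^2 - mono_x1 e * (- (mono_x2 e * a1))^3 - (mono_x1 e)^3 * (- a3) =
    e1^6 * e2^12 * e3^18 * e4^14 * e5^10 * e6^6 * e7^9 * e8^2 *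
    (e1^2 * e2 * a1^3 + e7 * a2^2 + e4 * e5^2 * e6^3 * e8^4 * a3)"
  unfolding e_def mono_x0.simps mono_x1.simps mono_x2.simps by algebra

lemma Phi_local_exps:
  fixes e1 e2 e3 e4 e5 e6 e7 e8 a1 a2 a3 :: int
  assumes pos: "pos_vec (e1, e2, e3, e4, e5, e6, e7, e8)" and a2: "0 < a2"
    and cop: "torsor_coprime e1 e2 e3 e4 e5 e6 e7 e8 a1 a2 a3" and p: "prime p"
    and x: "Phi (e1, e2, e3, e4, e5, e6, e7, e8, a1, a2, a3) = (x0, x1, x2, x3)"
  shows "vals p (e1, e2, e3, e4, e5, e6, e7, e8) =
    local_exps (multiplicity p x1) (val_x2 p x1 x2) (multiplicity p x0)"
proof -
  define e where "e = (e1, e2, e3, e4, e5, e6, e7, e8)"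
  define E where "E = vals p e"
  define A1 where "A1 = (if a1 = 0 then 1 else multiplicity p a1)"
  have pe: "prime_elem p" using p by (rule prime_imp_prime_elem)
  have x_eqs: "x0 = mono_x0 e * a2" "x1 = mono_x1 e" "x2 = - (mono_x2 e * a1)"
    using x unfolding Phi_def e_def by (simp_all add: Let_def)
  have "0 < mono_x0 e" "0 < mono_x2 e"
    unfolding e_def by (rule monomials_pos[OF pos])+
  then have mono_nz: "mono_x0 e \<noteq> 0" "mono_x2 e \<noteq> 0" by simp_all
  have "admissible E (of_bool (p dvd a1)) (of_bool (p dvd a2))"
    using torsor_coprime_iff_local[OF pos] cop p unfolding E_def e_def by blast
  moreover have "A1 = 0 \<longleftrightarrow> \<not> p dvd a1" "multiplicity p a2 = 0 \<longleftrightarrow> \<not> p dvd a2"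
    using p a2 by (auto simp: A1_def prime_dvd_iff_multiplicity_pos)
  ultimately have adm: "admissible E A1 (multiplicity p a2)"
    using admissible_cong[of A1 "of_bool (p dvd a1)" "multiplicity p a2" "of_bool (p dvd a2)" E]
    by simp
  have v1: "multiplicity p x1 = deg_x1 E"
    using multiplicity_monomials[OF pos p] x_eqs unfolding E_def e_def by simp
  have v2: "val_x2 p x1 x2 = deg_x2 E + A1"
  proof (cases "a1 = 0")
    case True
    then have "deg_x1 E = deg_x2 E" using admissible_A1_pos[OF adm] by (simp add: A1_def)
    then show ?thesis using True v1 x_eqs by (simp add: val_x2_def A1_def)
  next
    case False
    then show ?thesis
      using x_eqs mono_nz multiplicity_monomials[OF pos p] unfolding E_def e_def
      by (simp add: val_x2_def A1_def prime_elem_multiplicity_mult_distrib[OF pe])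
  qed
  have v0: "multiplicity p x0 = deg_x0 E + multiplicity p a2"
    using x_eqs mono_nz a2 multiplicity_monomials[OF pos p] unfolding E_def e_def
    by (simp add: prime_elem_multiplicity_mult_distrib[OF pe])
  show ?thesis
    using local_exps_admissible[OF adm] unfolding v1 v2 v0 E_def e_def by simp
qed

(* Primitivity of the image of a torsor point: a prime dividing x3 = -a3 and x2 cannot divide
   mono_x2, hence divides a1, which excludes every exponent except that of e1; and that one
   vanishes since the valuation of x2 / a1 is zero. *)
lemma Phi_primitive:
  fixes e1 e2 e3 e4 e5 e6 e7 e8 a1 a2 a3 :: int
  assumes pos: "pos_vec (e1, e2, e3, e4, e5, e6, e7, e8)"
    and cop: "torsor_coprime e1 e2 e3 e4 e5 e6 e7 e8 a1 a2 a3"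
  defines "e \<equiv> (e1, e2, e3, e4, e5, e6, e7, e8)"
  shows "gcd (mono_x1 e) (gcd (- (mono_x2 e * a1)) (- a3)) = 1"
  unfolding gcd3_eq_1_iff
proof (intro allI impI notI)
  fix p :: int assume p: "prime p"
    and dvd: "p dvd mono_x1 e" "p dvd - (mono_x2 e * a1)" "p dvd - a3"
  define E where "E = vals p e"
  have pos_e: "pos_vec e" using pos unfolding e_def .
  have local: "admissible E (of_bool (p dvd a1)) (of_bool (p dvd a2))" "p dvd a3 \<longrightarrow> deg_x2 E = 0"
    using torsor_coprime_iff_local[OF pos] cop p unfolding E_def e_def by auto
  have "deg_x2 E = 0" using local(2) dvd(3) by simp
  then have "\<not> p dvd mono_x2 e"
    using multiplicity_monomials(2)[OF pos_e p] monomials_pos(2)[OF pos_e] p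
    by (simp add: E_def prime_dvd_iff_multiplicity_pos)
  then have "p dvd a1" using dvd(2) p by (simp add: prime_dvd_mult_iff)
  then have "deg_x1 E = 0" using admissible_A1_pos[OF local(1)] \<open>deg_x2 E = 0\<close> by simp
  moreover have "0 < deg_x1 E"
    using dvd(1) multiplicity_monomials(1)[OF pos_e p] monomials_pos(1)[OF pos_e] p
    by (simp add: E_def prime_dvd_iff_multiplicity_pos)
  ultimately show False by simp
qed

lemma Phi_in_Splus:
  assumes "t \<in> N_set B"
  shows "Phi t \<in> Splus B"
proof -
  obtain e1 e2 e3 e4 e5 e6 e7 e8 a1 a2 a3 where t: "t = (e1, e2, e3, e4, e5, e6, e7, e8, a1, a2, a3)"
    by (metis prod.collapse)
  obtain x0 x1 x2 x3 where x: "Phi t = (x0, x1, x2, x3)"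
    by (metis prod.collapse)
  define e where "e = (e1, e2, e3, e4, e5, e6, e7, e8)"
  have eq: "e1^2 * e2 * a1^3 + e7 * a2^2 + e4 * e5^2 * e6^3 * e8^4 * a3 = 0"
    and pos: "pos_vec e" and a2: "0 < a2" and cop: "torsor_coprime e1 e2 e3 e4 e5 e6 e7 e8 a1 a2 a3"
    and box: "in_box B (x0, x1, x2, x3)"
    using assms x unfolding t N_set_def torsor_cond_iff e_def by auto
  have x_eqs: "x0 = mono_x0 e * a2" "x1 = mono_x1 e" "x2 = - (mono_x2 e * a1)" "x3 = - a3"
    using x unfolding t Phi_def e_def by (simp_all add: Let_def)
  have "x0^2 - x1 * x2^3 - x1^3 * x3 = 0"
    using surface_identity[of e1 e2 e3 e4 e5 e6 e7 e8 a2 a1 a3] eq unfolding x_eqs e_def by simp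
  moreover have "0 < x1" "0 < x0" using monomials_pos[OF pos] a2 unfolding x_eqs by simp_all
  moreover have "gcd x1 (gcd x2 x3) = 1"
    using Phi_primitive[of e1 e2 e3 e4 e5 e6 e7 e8 a1 a2 a3] pos cop unfolding x_eqs e_def by simp
  ultimately show ?thesis using box x by (simp add: mem_Splus)
qed

definition assemble :: "(nat \<Rightarrow> nat \<Rightarrow> nat \<Rightarrow> nat) \<Rightarrow> int \<Rightarrow> int \<Rightarrow> int \<Rightarrow> int" where
  "assemble f x0 x1 x2 =
     (\<Prod>q\<in>prime_factors x1. q ^ f (multiplicity q x1) (val_x2 q x1 x2) (multiplicity q x0))"

lemma assemble_pos: "0 < assemble f x0 x1 x2"
  unfolding assemble_def by (intro prod_pos) (auto simp: in_prime_factors_iff prime_gt_0_int)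

lemma multiplicity_assemble:
  assumes x1: "x1 \<noteq> 0" and f0: "\<And>b d. f 0 b d = 0" and p: "prime p"
  shows "multiplicity p (assemble f x0 x1 x2) =
    f (multiplicity p x1) (val_x2 p x1 x2) (multiplicity p x0)"
proof -
  let ?k = "\<lambda>q. f (multiplicity q x1) (val_x2 q x1 x2) (multiplicity q x0)"
  have "multiplicity p (assemble f x0 x1 x2) = (\<Sum>q\<in>prime_factors x1. multiplicity p (q ^ ?k q))"
    unfolding assemble_def using p
    by (intro prime_elem_multiplicity_prod_distrib) (auto simp: in_prime_factors_iff)
  also have "\<dots> = (\<Sum>q\<in>prime_factors x1. if q = p then ?k q else 0)"
    using p by (intro sum.cong refl) (auto simp: in_prime_factors_iff multiplicity_distinct_prime_power)
  also have "\<dots> = (if p \<in> prime_factors x1 then ?k p else 0)"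
    by (simp add: sum.delta')
  also have "\<dots> = ?k p"
    using p x1 f0 by (auto simp: prime_factors_multiplicity)
  finally show ?thesis .
qed

definition torsor_exps :: "int \<Rightarrow> int \<Rightarrow> int \<Rightarrow> intvec" where
  "torsor_exps x0 x1 x2 =
     (assemble loc_exp1 x0 x1 x2, assemble loc_exp2 x0 x1 x2, assemble loc_exp3 x0 x1 x2,
      assemble loc_exp4 x0 x1 x2, assemble loc_exp5 x0 x1 x2, assemble loc_exp6 x0 x1 x2,
      assemble loc_exp7 x0 x1 x2, assemble loc_exp8 x0 x1 x2)"

lemma torsor_exps_pos: "pos_vec (torsor_exps x0 x1 x2)"
  by (simp add: torsor_exps_def assemble_pos)

lemma vals_torsor_exps:
  assumes "x1 \<noteq> 0" "prime p"
  shows "vals p (torsor_exps x0 x1 x2) =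
    local_exps (multiplicity p x1) (val_x2 p x1 x2) (multiplicity p x0)"
proof -
  have "loc_exp1 0 b d = 0" "loc_exp2 0 b d = 0" "loc_exp3 0 b d = 0" "loc_exp4 0 b d = 0"
    "loc_exp5 0 b d = 0" "loc_exp6 0 b d = 0" "loc_exp7 0 b d = 0" "loc_exp8 0 b d = 0" for b d
    by (simp_all add: local_exps_simps)
  then show ?thesis
    unfolding torsor_exps_def local_exps_def by (simp add: multiplicity_assemble assms)
qed

lemma pos_vec_eqI:
  assumes "pos_vec e" "pos_vec e'" "\<And>p. prime p \<Longrightarrow> vals p e = vals p e'"
  shows "e = e'"
proof -
  have eq_pos: "x = y" if "0 < x" "0 < y" "\<And>p. prime p \<Longrightarrow> multiplicity p x = multiplicity p y"
    for x y :: int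
    using multiplicity_eq_imp_eq[of x y] that by simp
  obtain e1 e2 e3 e4 e5 e6 e7 e8 where e: "e = (e1, e2, e3, e4, e5, e6, e7, e8)"
    by (rule tuple8_cases)
  obtain d1 d2 d3 d4 d5 d6 d7 d8 where e': "e' = (d1, d2, d3, d4, d5, d6, d7, d8)"
    by (rule tuple8_cases)
  show ?thesis
    using assms unfolding e e' by (simp add: eq_pos)
qed

definition Psi :: "int \<times> int \<times> int \<times> int
    \<Rightarrow> int \<times> int \<times> int \<times> int \<times> int \<times> int \<times> int \<times> int \<times> int \<times> int \<times> int" where
  "Psi = (\<lambda>(x0, x1, x2, x3). case torsor_exps x0 x1 x2 of (e1, e2, e3, e4, e5, e6, e7, e8) \<Rightarrow>
     let e = (e1, e2, e3, e4, e5, e6, e7, e8)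
     in (e1, e2, e3, e4, e5, e6, e7, e8, - (x2 div mono_x2 e), x0 div mono_x0 e, - x3))"

lemma Psi_eq:
  assumes "torsor_exps x0 x1 x2 = (e1, e2, e3, e4, e5, e6, e7, e8)"
  defines "e \<equiv> (e1, e2, e3, e4, e5, e6, e7, e8)"
  shows "Psi (x0, x1, x2, x3) =
    (e1, e2, e3, e4, e5, e6, e7, e8, - (x2 div mono_x2 e), x0 div mono_x0 e, - x3)"
  using assms unfolding Psi_def by (simp add: Let_def del: mono_x0.simps mono_x2.simps)

(* Psi is a left inverse of Phi on torsor points, since both have the same exponent vectors. *)
lemma Psi_Phi:
  assumes "t \<in> N_set B"
  shows "Psi (Phi t) = t"
proof -
  obtain e1 e2 e3 e4 e5 e6 e7 e8 a1 a2 a3 where t: "t = (e1, e2, e3, e4, e5, e6, e7, e8, a1, a2, a3)"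
    by (metis prod.collapse)
  obtain x0 x1 x2 x3 where x: "Phi t = (x0, x1, x2, x3)"
    by (metis prod.collapse)
  define e where "e = (e1, e2, e3, e4, e5, e6, e7, e8)"
  have pos: "pos_vec e" and a2: "0 < a2" and cop: "torsor_coprime e1 e2 e3 e4 e5 e6 e7 e8 a1 a2 a3"
    using assms unfolding t N_set_def torsor_cond_iff e_def by auto
  have x_eqs: "x0 = mono_x0 e * a2" "x1 = mono_x1 e" "x2 = - (mono_x2 e * a1)" "x3 = - a3"
    using x unfolding t Phi_def e_def by (simp_all add: Let_def)
  have "0 < mono_x1 e" "0 < mono_x2 e" "0 < mono_x0 e" using monomials_pos[OF pos] by simp_all
  have exps: "torsor_exps x0 x1 x2 = e"
  proof (rule pos_vec_eqI[OF torsor_exps_pos pos])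
    fix p :: int assume p: "prime p"
    show "vals p (torsor_exps x0 x1 x2) = vals p e"
      using vals_torsor_exps[OF _ p] Phi_local_exps[OF _ a2 cop p] pos x
      \<open>0 < mono_x1 e\<close> unfolding t e_def x_eqs(2) by simp
  qed
  then have "Psi (x0, x1, x2, x3) =
      (e1, e2, e3, e4, e5, e6, e7, e8, - (x2 div mono_x2 e), x0 div mono_x0 e, - x3)"
    unfolding e_def by (rule Psi_eq)
  moreover have "x2 div mono_x2 e = - a1" "x0 div mono_x0 e = a2"
    using \<open>0 < mono_x2 e\<close> \<open>0 < mono_x0 e\<close> unfolding x_eqs
    by (simp_all flip: mult_minus_right)
  ultimately show ?thesis using x x_eqs(4) unfolding t by simp
qed

lemma Splus_local:
  assumes "(x0, x1, x2, x3) \<in> Splus B" "prime p"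
  defines "E \<equiv> vals p (torsor_exps x0 x1 x2)"
  obtains A1 A2 where "admissible E A1 A2" "multiplicity p x1 = deg_x1 E"
    "val_x2 p x1 x2 = deg_x2 E + A1" "multiplicity p x0 = deg_x0 E + A2"
proof -
  have "x0^2 = x1 * x2^3 + x1^3 * x3" "x0 \<noteq> 0" "x1 \<noteq> 0" "gcd x1 (gcd x2 x3) = 1"
    using assms(1) by (auto simp: mem_Splus)
  then have "valuation_constraint (multiplicity p x1) (val_x2 p x1 x2) (multiplicity p x0)"
    using assms(2) by (rule surface_valuation_constraint)
  moreover have "E = local_exps (multiplicity p x1) (val_x2 p x1 x2) (multiplicity p x0)"
    unfolding E_def using \<open>x1 \<noteq> 0\<close> assms(2) by (rule vals_torsor_exps)
  ultimately show thesis using local_exps_constraint that by metis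
qed

lemma Psi_factorization:
  assumes x: "(x0, x1, x2, x3) \<in> Splus B"
  defines "e \<equiv> torsor_exps x0 x1 x2"
  shows "x1 = mono_x1 e" "mono_x2 e dvd x2" "mono_x0 e dvd x0"
proof -
  have pos: "pos_vec e" unfolding e_def by (rule torsor_exps_pos)
  have "0 < x1" "0 < x0" using x by (simp_all add: mem_Splus)
  have "normalize x1 = normalize (mono_x1 e)"
  proof (rule multiplicity_eq_imp_eq)
    fix p :: int assume p: "prime p"
    obtain A1 A2 where "multiplicity p x1 = deg_x1 (vals p e)"
      using Splus_local[OF x p] unfolding e_def by metis
    then show "multiplicity p x1 = multiplicity p (mono_x1 e)"
      using multiplicity_monomials(1)[OF pos p] by simp
  qed (use \<open>0 < x1\<close> monomials_pos[OF pos] in auto)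
  then show "x1 = mono_x1 e" using \<open>0 < x1\<close> monomials_pos[OF pos] by simp
  show "mono_x2 e dvd x2"
  proof (cases "x2 = 0")
    case False
    show ?thesis
    proof (rule multiplicity_le_imp_dvd)
      fix p :: int assume p: "prime p"
      obtain A1 A2 where "val_x2 p x1 x2 = deg_x2 (vals p e) + A1"
        using Splus_local[OF x p] unfolding e_def by metis
      then show "multiplicity p (mono_x2 e) \<le> multiplicity p x2"
        using multiplicity_monomials(2)[OF pos p] False by (simp add: val_x2_def)
    qed (use monomials_pos[OF pos] in auto)
  qed simp
  show "mono_x0 e dvd x0"
  proof (rule multiplicity_le_imp_dvd)
    fix p :: int assume p: "prime p"
    obtain A1 A2 where "multiplicity p x0 = deg_x0 (vals p e) + A2"
      using Splus_local[OF x p] unfolding e_def by metis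
    then show "multiplicity p (mono_x0 e) \<le> multiplicity p x0"
      using multiplicity_monomials(3)[OF pos p] by simp
  qed (use monomials_pos[OF pos] in auto)
qed

lemma Phi_Psi:
  assumes "x \<in> Splus B"
  shows "Phi (Psi x) = x"
proof -
  obtain x0 x1 x2 x3 where x: "x = (x0, x1, x2, x3)"
    by (metis prod.collapse)
  obtain e1 e2 e3 e4 e5 e6 e7 e8 where e: "torsor_exps x0 x1 x2 = (e1, e2, e3, e4, e5, e6, e7, e8)"
    by (rule tuple8_cases)
  note fact = Psi_factorization[OF assms[unfolded x], unfolded e]
  show ?thesis
    unfolding x Psi_eq[OF e] Phi_def using fact
    by (simp add: Let_def del: mono_x0.simps mono_x1.simps mono_x2.simps)
qed

(* At a prime dividing x3 the exponent vector of a point of Splus only involves e8: otherwise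
   p divides x1, so primitivity forces v_p(x2) = 0, i.e. a vanishing valuation triple entry. *)
lemma Splus_local_x3:
  assumes x: "(x0, x1, x2, x3) \<in> Splus B" and p: "prime p" and dvd: "p dvd x3"
  shows "deg_x2 (vals p (torsor_exps x0 x1 x2)) = 0"
proof -
  define E where "E = vals p (torsor_exps x0 x1 x2)"
  obtain A1 A2 where v1: "multiplicity p x1 = deg_x1 E" and v2: "val_x2 p x1 x2 = deg_x2 E + A1"
    using Splus_local[OF x p] unfolding E_def by metis
  have "deg_x2 E = 0" if "deg_x2 E \<noteq> 0"
  proof -
    have "0 < multiplicity p x1" using that v1 deg_x2_le_deg_x1[of E] by simp
    then have "p dvd x1" using p x by (simp add: prime_dvd_iff_multiplicity_pos mem_Splus)
    then have "val_x2 p x1 x2 = 0"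
      using val_x2_eq_0_if_dvd_x3[of x1 x2 x3 p] x p dvd by (simp add: mem_Splus)
    then show ?thesis using v2 by simp
  qed
  then show ?thesis unfolding E_def by blast
qed

(* The coprimality conditions of a1 and a2 for Psi x at a prime p: their valuations are the
   surplus A1, A2 in the valuation triple, except that a1 = 0 when x2 = 0, in which case A1 > 0. *)
lemma Psi_local_admissible:
  assumes x: "(x0, x1, x2, x3) \<in> Splus B" and exps: "torsor_exps x0 x1 x2 = e" and p: "prime p"
  defines "a1 \<equiv> - (x2 div mono_x2 e)" and "a2 \<equiv> x0 div mono_x0 e"
  shows "admissible (vals p e) (of_bool (p dvd a1)) (of_bool (p dvd a2))"
proof -
  define E where "E = vals p e"
  have pe: "prime_elem p" using p by (rule prime_imp_prime_elem)
  have pos: "pos_vec e" using torsor_exps_pos[of x0 x1 x2] unfolding exps .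
  note fact = Psi_factorization[OF x, unfolded exps]
  have x2_eq: "x2 = - (mono_x2 e * a1)" and x0_eq: "x0 = mono_x0 e * a2"
    using fact unfolding a1_def a2_def by simp_all
  have "0 < x0" using x by (simp add: mem_Splus)
  then have "a2 \<noteq> 0" "0 < mono_x0 e" "0 < mono_x2 e" using x0_eq monomials_pos[OF pos] by auto
  obtain A1 A2 where adm: "admissible E A1 A2" and v1: "multiplicity p x1 = deg_x1 E"
    and v2: "val_x2 p x1 x2 = deg_x2 E + A1" and v0: "multiplicity p x0 = deg_x0 E + A2"
    using Splus_local[OF x p] unfolding exps E_def by metis
  have "multiplicity p x0 = deg_x0 E + multiplicity p a2"
    using x0_eq \<open>a2 \<noteq> 0\<close> \<open>0 < mono_x0 e\<close> multiplicity_monomials(3)[OF pos p]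
    by (simp add: E_def prime_elem_multiplicity_mult_distrib[OF pe])
  then have "A2 = 0 \<longleftrightarrow> \<not> p dvd a2"
    using v0 p \<open>a2 \<noteq> 0\<close> by (simp add: prime_dvd_iff_multiplicity_pos)
  moreover have "A1 = 0 \<longleftrightarrow> \<not> p dvd a1"
  proof (cases "x2 = 0")
    case True
    then have "A1 = deg_x1 E - deg_x2 E + 1"
      using v1 v2 deg_x2_le_deg_x1[of E] by (simp add: val_x2_def)
    then show ?thesis using True x2_eq \<open>0 < mono_x2 e\<close> by simp
  next
    case False
    then have "a1 \<noteq> 0" using x2_eq by auto
    then have "val_x2 p x1 x2 = deg_x2 E + multiplicity p a1"
      using False x2_eq \<open>0 < mono_x2 e\<close> multiplicity_monomials(2)[OF pos p]
      by (simp add: E_def val_x2_def prime_elem_multiplicity_mult_distrib[OF pe])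
    then show ?thesis using v2 p \<open>a1 \<noteq> 0\<close> by (simp add: prime_dvd_iff_multiplicity_pos)
  qed
  ultimately show ?thesis
    using adm admissible_cong[of A1 "of_bool (p dvd a1)" A2 "of_bool (p dvd a2)" E]
    unfolding E_def by simp
qed

lemma Psi_coprime:
  assumes x: "(x0, x1, x2, x3) \<in> Splus B"
    and exps: "torsor_exps x0 x1 x2 = (e1, e2, e3, e4, e5, e6, e7, e8)"
  defines "e \<equiv> (e1, e2, e3, e4, e5, e6, e7, e8)"
  shows "torsor_coprime e1 e2 e3 e4 e5 e6 e7 e8 (- (x2 div mono_x2 e)) (x0 div mono_x0 e) (- x3)"
proof -
  have pos: "pos_vec (e1, e2, e3, e4, e5, e6, e7, e8)" using torsor_exps_pos[of x0 x1 x2] unfolding exps .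
  show ?thesis
    unfolding torsor_coprime_iff_local[OF pos]
    using Psi_local_admissible[OF x exps[folded e_def]] Splus_local_x3[OF x] exps
    unfolding e_def by simp
qed

lemma Psi_in_N_set:
  assumes x: "x \<in> Splus B"
  shows "Psi x \<in> N_set B"
proof -
  obtain x0 x1 x2 x3 where x_eq: "x = (x0, x1, x2, x3)"
    by (metis prod.collapse)
  obtain e1 e2 e3 e4 e5 e6 e7 e8 where exps: "torsor_exps x0 x1 x2 = (e1, e2, e3, e4, e5, e6, e7, e8)"
    by (rule tuple8_cases)
  define e where "e = (e1, e2, e3, e4, e5, e6, e7, e8)"
  define a1 where "a1 = - (x2 div mono_x2 e)"
  define a2 where "a2 = x0 div mono_x0 e"
  have Psi_x: "Psi (x0, x1, x2, x3) = (e1, e2, e3, e4, e5, e6, e7, e8, a1, a2, - x3)"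
    unfolding Psi_eq[OF exps] a1_def a2_def e_def ..
  have pos: "pos_vec e" using torsor_exps_pos[of x0 x1 x2] unfolding exps e_def .
  have Phi_t: "Phi (e1, e2, e3, e4, e5, e6, e7, e8, a1, a2, - x3) = (x0, x1, x2, x3)"
    using Phi_Psi[OF x] unfolding Psi_x x_eq .
  then have x_eqs: "x0 = mono_x0 e * a2" "x1 = mono_x1 e" "x2 = - (mono_x2 e * a1)"
    unfolding Phi_def e_def by (simp_all add: Let_def)
  have surface: "x0^2 = x1 * x2^3 + x1^3 * x3" "0 < x0" and box: "in_box B (x0, x1, x2, x3)"
    using x unfolding x_eq mem_Splus by blast+
  have "0 < a2" using surface(2) monomials_pos(3)[OF pos] unfolding x_eqs
    by (simp add: zero_less_mult_iff)
  have "e1^6 * e2^12 * e3^18 * e4^14 * e5^10 * e6^6 * e7^9 * e8^2 *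
      (e1^2 * e2 * a1^3 + e7 * a2^2 + e4 * e5^2 * e6^3 * e8^4 * (- x3)) = 0"
    using surface_identity[of e1 e2 e3 e4 e5 e6 e7 e8 a2 a1 "- x3"] surface(1)
    unfolding x_eqs[unfolded e_def] by simp
  moreover have "e1^6 * e2^12 * e3^18 * e4^14 * e5^10 * e6^6 * e7^9 * e8^2 \<noteq> 0"
    using pos unfolding e_def by simp
  ultimately have "e1^2 * e2 * a1^3 + e7 * a2^2 + e4 * e5^2 * e6^3 * e8^4 * (- x3) = 0" by simp
  moreover have "torsor_coprime e1 e2 e3 e4 e5 e6 e7 e8 a1 a2 (- x3)"
    using Psi_coprime[OF x[unfolded x_eq] exps] unfolding a1_def a2_def e_def .
  ultimately show ?thesis
    using pos \<open>0 < a2\<close> box Phi_t unfolding x_eq Psi_x N_set_def torsor_cond_iff e_def by simp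
qed

lemma bij_Phi: "bij_betw Phi (N_set B) (Splus B)"
  by (rule bij_betw_byWitness[where f' = Psi])
    (auto simp: Psi_Phi Phi_Psi Phi_in_Splus Psi_in_N_set)

lemma card_N_set: "card (N_set B) = card (Splus B)"
  using bij_Phi by (rule bij_betw_same_card)

section \<open>Points with vanishing x0\<close>

lemma coprime_cube_factors:
  fixes a b c :: int
  assumes a: "0 < a" and cop: "coprime a b" and cube: "c^3 = a^2 * b"
  obtains u w where "a = u^3" "b = w^3"
proof -
  have cube_mult: "3 dvd multiplicity p a \<and> 3 dvd multiplicity p b" if p: "prime p" for p
  proof (cases "b = 0")
    case True
    then show ?thesis using cop a p by (simp add: not_dvd_imp_multiplicity_0)
  next
    case False
    have pe: "prime_elem p" using p by (rule prime_imp_prime_elem)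
    have "multiplicity p (c^3) = 2 * multiplicity p a + multiplicity p b"
      unfolding cube using a False
      by (simp add: prime_elem_multiplicity_mult_distrib[OF pe] prime_elem_multiplicity_power_distrib[OF pe])
    moreover have "c \<noteq> 0" using cube a False by auto
    ultimately have "3 * multiplicity p c = 2 * multiplicity p a + multiplicity p b"
      by (simp add: prime_elem_multiplicity_power_distrib[OF pe])
    moreover have "multiplicity p a = 0 \<or> multiplicity p b = 0"
      using cop p a False coprime_iff_no_common_prime
      by (metis prime_dvd_iff_multiplicity_pos less_irrefl neq0_conv)
    ultimately show ?thesis by presburger
  qed
  have "is_nth_power 3 (normalize a)" "is_nth_power 3 (normalize b)"
    using cube_mult is_nth_power_conv_multiplicity[of 3 a] is_nth_power_conv_multiplicity[of 3 b]
    by auto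
  then obtain u w where "\<bar>a\<bar> = u^3" "\<bar>b\<bar> = w^3"
    by (auto elim!: is_nth_powerE)
  then have "a = u^3" "b = (sgn b * w)^3"
    using a by (auto simp: power_mult_distrib abs_if sgn_if)
  then show thesis by (rule that)
qed

lemma odd_power_inj:
  fixes x y :: "'a :: linordered_idom"
  assumes "odd n" "x^n = y^n"
  shows "x = y"
proof -
  have "\<bar>x\<bar>^n = \<bar>y\<bar>^n" using assms(2) by (metis power_abs)
  then have "\<bar>x\<bar> = \<bar>y\<bar>" using assms(1) by (rule power_eq_imp_eq_base[OF _ abs_ge_zero abs_ge_zero odd_pos])
  moreover have "0 \<le> x \<longleftrightarrow> 0 \<le> y" using assms by (metis zero_le_odd_power)
  ultimately show ?thesis by (metis abs_of_nonneg abs_of_neg linorder_not_le minus_equation_iff abs_of_nonpos)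
qed

lemma cube_root_bound:
  fixes y B :: real
  assumes "0 \<le> y" "y^3 \<le> B"
  shows "y \<le> B powr (1/3)"
proof -
  have "(y^3) powr (1/3) = (y powr 3) powr (1/3)" using assms(1) by simp
  also have "\<dots> = y" using assms(1) by (simp add: powr_powr del: powr_numeral)
  finally have "y = (y^3) powr (1/3)" by simp
  also have "\<dots> \<le> B powr (1/3)" using assms by (intro powr_mono2) auto
  finally show ?thesis .
qed

definition Zplus :: "real \<Rightarrow> (int \<times> int \<times> int \<times> int) set" where
  "Zplus B = {(x0, x1, x2, x3). (x0, x1, x2, x3) \<in> NU_set B \<and> 0 < x1 \<and> x0 = 0}"

(* Such points are (0, u^3, -u^2 w, w^3) with |u|, |w| <= B^(1/3), since x2^3 = x1^2 (-x3)
   and x1 is coprime to x3. *)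
lemma Zplus_param:
  fixes B :: real
  defines "K \<equiv> \<lfloor>B powr (1/3)\<rfloor>"
  shows "Zplus B \<subseteq> (\<lambda>(u, w). (0, u^3, - (u^2 * w), w^3)) ` ({-K..K} \<times> {-K..K})"
proof
  fix x assume "x \<in> Zplus B"
  then obtain x1 x2 x3 where x: "x = (0, x1, x2, x3)" and eq: "0 = x1 * x2^3 + x1^3 * x3"
    and "0 < x1" and g: "gcd x1 (gcd x2 x3) = 1"
    and bd: "real_of_int \<bar>x1\<bar> \<le> B" "real_of_int \<bar>x3\<bar> \<le> B"
    unfolding Zplus_def NU_set_def by auto
  have "x1 * (x2^3 + x1^2 * x3) = 0"
    using eq by (simp add: algebra_simps power2_eq_square power3_eq_cube)
  then have cube: "x2^3 = x1^2 * (- x3)" using \<open>0 < x1\<close> by simp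
  have "coprime x1 (- x3)"
    unfolding coprime_iff_no_common_prime
  proof (intro allI impI notI)
    fix p :: int assume p: "prime p" "p dvd x1" "p dvd - x3"
    then have "p dvd x2^3" unfolding cube by simp
    then have "p dvd x2" using p(1) prime_dvd_power by blast
    then show False using g p by (auto simp: gcd3_eq_1_iff)
  qed
  then obtain u w where uw: "x1 = u^3" "- x3 = w^3"
    using coprime_cube_factors[OF \<open>0 < x1\<close> _ cube] by blast
  have "x2^3 = (u^2 * w)^3" using cube uw by (simp add: power_mult_distrib flip: power_mult)
  then have "x2 = u^2 * w" by (rule odd_power_inj[rotated]) simp
  then have x2: "x2 = - (u^2 * (- w))" by simp
  have x3: "x3 = (- w)^3" using uw(2) by simp
  have "real_of_int \<bar>u\<bar> \<le> B powr (1/3)"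
    by (rule cube_root_bound) (use bd(1) uw(1) in \<open>simp_all add: power_abs\<close>)
  moreover have "real_of_int \<bar>- w\<bar> \<le> B powr (1/3)"
    by (rule cube_root_bound) (use bd(2) x3 in \<open>simp_all add: power_abs\<close>)
  ultimately have "\<bar>u\<bar> \<le> K" "\<bar>- w\<bar> \<le> K"
    unfolding K_def by (simp_all only: le_floor_iff)
  then show "x \<in> (\<lambda>(u, w). (0, u^3, - (u^2 * w), w^3)) ` ({-K..K} \<times> {-K..K})"
    unfolding x x2 x3 uw(1) by (intro image_eqI[of _ _ "(u, - w)"]) auto
qed

(* Counting the parameters (u, w) gives at most (2 B^(1/3) + 1)^2 <= 9 B^(2/3) points. *)
lemma card_Zplus:
  assumes "1 \<le> B"
  shows "real (card (Zplus B)) \<le> 9 * B powr (2/3)"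
proof -
  define K where "K = \<lfloor>B powr (1/3)\<rfloor>"
  have r: "1 \<le> B powr (1/3)" using assms by (intro ge_one_powr_ge_zero) auto
  have "card (Zplus B) \<le> card ((\<lambda>(u, w). (0::int, u^3, - (u^2 * w), w^3)) ` ({-K..K} \<times> {-K..K}))"
    by (rule card_mono) (use Zplus_param[of B] in \<open>simp_all add: K_def\<close>)
  also have "\<dots> \<le> card ({-K..K} \<times> {-K..K})" by (rule card_image_le) simp
  also have "\<dots> = nat (2*K + 1) * nat (2*K + 1)" by (simp add: card_cartesian_product)
  finally have card_le: "card (Zplus B) \<le> nat (2*K + 1) * nat (2*K + 1)" .
  have side: "real (nat (2*K + 1)) = 2 * real_of_int K + 1" using r unfolding K_def by simp
  have "real (card (Zplus B)) \<le> real (nat (2*K + 1) * nat (2*K + 1))"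
    using card_le by (rule of_nat_mono)
  also have "\<dots> = (2 * real_of_int K + 1)^2"
    unfolding of_nat_mult side by (simp add: power2_eq_square)
  also have "\<dots> \<le> (3 * B powr (1/3))^2"
    using r unfolding K_def by (intro power_mono) linarith+
  also have "\<dots> = 9 * B powr (2/3)"
    by (simp add: power2_eq_square flip: powr_add)
  finally show ?thesis .
qed

section \<open>The symmetry count and the main theorem\<close>

lemma NU_set_finite: "finite (NU_set B)"
proof -
  define k where "k = \<lceil>B\<rceil> + \<lceil>B^2\<rceil>"
  have "NU_set B \<subseteq> {-k..k} \<times> {-k..k} \<times> {-k..k} \<times> {-k..k}"
  proof
    fix x assume "x \<in> NU_set B"
    then obtain x0 x1 x2 x3 where x: "x = (x0, x1, x2, x3)"
      and bd: "real_of_int \<bar>x1\<bar> \<le> B" "real_of_int \<bar>x2\<bar> \<le> B" "real_of_int \<bar>x3\<bar> \<le> B"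
        "real_of_int \<bar>x0\<bar> \<le> B^2"
      unfolding NU_set_def by auto
    have "0 \<le> B" using bd(1) by (meson abs_ge_zero of_int_0_le_iff order_trans)
    then have "0 \<le> \<lceil>B\<rceil>" "0 \<le> \<lceil>B^2\<rceil>"
      using ceiling_mono[of 0 B] ceiling_mono[of 0 "B^2"] by simp_all
    moreover have "\<bar>x1\<bar> \<le> \<lceil>B\<rceil>" "\<bar>x2\<bar> \<le> \<lceil>B\<rceil>" "\<bar>x3\<bar> \<le> \<lceil>B\<rceil>" "\<bar>x0\<bar> \<le> \<lceil>B^2\<rceil>"
      using bd by (simp_all add: le_ceiling_iff)
    ultimately show "x \<in> {-k..k} \<times> {-k..k} \<times> {-k..k} \<times> {-k..k}"
      unfolding x k_def by auto
  qed
  then show ?thesis by (rule finite_subset) simp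
qed

lemma card_eq_by_involution:
  assumes "\<And>x. f (f x) = x" "f ` A \<subseteq> B" "f ` B \<subseteq> A"
  shows "card A = card B"
  using assms by (intro bij_betw_same_card[of f] bij_betw_byWitness[where f' = f]) auto

(* The four sign classes: x1 < 0 mirrors x1 > 0, and within x1 > 0 the points with x0 < 0
   mirror those with x0 > 0. *)
lemma card_NU_set: "card (NU_set B) = 2 * (2 * card (Splus B) + card (Zplus B))"
proof -
  define P where "P = {(x0, x1, x2, x3). (x0, x1, x2, x3) \<in> NU_set B \<and> 0 < x1}"
  define N where "N = {(x0, x1, x2, x3). (x0, x1, x2, x3) \<in> NU_set B \<and> x1 < 0}"
  define Sminus where "Sminus = {(x0, x1, x2, x3). (x0, x1, x2, x3) \<in> NU_set B \<and> 0 < x1 \<and> x0 < 0}"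
  have fin: "finite P" "finite N" "finite (Splus B)" "finite Sminus" "finite (Zplus B)"
    using NU_set_finite[of B] unfolding P_def N_def Splus_def Sminus_def Zplus_def
    by (auto elim: rev_finite_subset)
  have "card N = card P"
    by (rule card_eq_by_involution[of "\<lambda>(x0, x1, x2, x3). (x0, - x1, - x2, - x3)"])
      (auto simp: N_def P_def NU_set_def power_minus_odd)
  moreover have "card Sminus = card (Splus B)"
    by (rule card_eq_by_involution[of "\<lambda>(x0, x1, x2, x3). (- x0, x1, x2, x3)"])
      (auto simp: Sminus_def Splus_def NU_set_def)
  moreover have "NU_set B = P \<union> N" "P \<inter> N = {}"
    unfolding P_def N_def NU_set_def by auto
  moreover have "P = (Splus B \<union> Sminus) \<union> Zplus B" "Splus B \<inter> Sminus = {}"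
      "(Splus B \<union> Sminus) \<inter> Zplus B = {}"
    unfolding P_def Splus_def Sminus_def Zplus_def by auto
  ultimately show ?thesis using fin by (simp add: card_Un_disjoint)
qed

(* N_U(B) - 2 calN(B) = |Zplus B| = O(B^(2/3)). *)
theorem lemma9p2:
  shows "(\<lambda>B. N_U B - 2 * calN B) \<in> O[at_top](\<lambda>B. B powr (2/3))"
proof (rule bigoI[where c = 9])
  have diff: "N_U B - 2 * calN B = real (card (Zplus B))" for B
    unfolding N_U_def calN_def card_NU_set card_N_set by (simp add: field_simps)
  show "\<forall>\<^sub>F B in at_top. norm (N_U B - 2 * calN B) \<le> 9 * norm (B powr (2/3))"
    using eventually_ge_at_top[of "1::real"]
    by eventually_elim (simp add: diff card_Zplus)
qed

end
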